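(* Let $R$ be a GCD-domain. Let $0\leqslant n\leqslant m$, $s_0,s_1,\dots,s_n\in\operatorname{Sqf} R$ and $t_0,t_1,\dots,t_m\in\operatorname{Sqf} R$. If $$s_n^{2^n}s_{n-1}^{2^{n-1}}\cdots s_1^2s_0=t_m^{2^m}t_{m-1}^{2^{m-1}}\cdots t_1^2t_0,$$ then $s_i\sim t_i$ for $i=0,\dots,n$, and, if $m>n$, then $t_i\in R^{\ast}$ for $i=n+1,\dots,m$.
   Context: A GCD-domain is a commutative ring with identity without zero divisors in which the intersection of any two principal ideals is principal. $R^{\ast}$ denotes the set of invertible elements of $R$; $a\sim b$ means $a$ and $b$ are associated. An element $a\in R$ is square-free if it cannot be written as $a=b^2c$ with $b\in R\setminus R^{\ast}$ and $c\in R$; $\operatorname{Sqf} R$ denotes the set of square-free elements of $R$. *)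

theory Defs
  imports Main
begin

definition gcd_domain_prop :: "'a::idom itself \<Rightarrow> bool" where
  "gcd_domain_prop _ \<longleftrightarrow>
     (\<forall>a b :: 'a. \<exists>c. {x. a dvd x} \<inter> {x. b dvd x} = {x. c dvd x})"

definition Sqf :: "'a::idom set" where
  "Sqf = {a. \<not> (\<exists>b c. \<not> b dvd 1 \<and> a = b\<^sup>2 * c)}"

definition assoc :: "'a::idom \<Rightarrow> 'a \<Rightarrow> bool" where
  "assoc a b \<longleftrightarrow> (\<exists>u. u dvd 1 \<and> a = u * b)"

end

theory Submission
  imports Defs
begin

text \<open>Write both sides as \<open>s\<^sub>0 X\<^sup>2 = t\<^sub>0 Y\<^sup>2\<close>, where \<open>X, Y\<close> are the dyadic
  products of the shifted sequences. Dividing \<open>X, Y\<close> by their gcd leaves coprime cofactors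
  \<open>a', c'\<close> with \<open>a'\<^sup>2 s\<^sub>0 = c'\<^sup>2 t\<^sub>0\<close>; by the Euclid lemma of GCD-domains \<open>a'\<^sup>2\<close>
  divides the square-free \<open>t\<^sub>0\<close>, so \<open>a'\<close> is a unit, and symmetrically so is \<open>c'\<close>.
  Hence \<open>s\<^sub>0 \<sim> t\<^sub>0\<close> and \<open>X \<sim> Y\<close>; absorbing the unit into \<open>t\<^sub>1\<close> one inducts on the
  length. Padding \<open>s\<close> with ones reduces to \<open>n = m\<close>, and then \<open>1 \<sim> t\<^sub>i\<close> says that
  \<open>t\<^sub>i\<close> is a unit.\<close>

definition is_gcd :: "'a::comm_semiring_1 \<Rightarrow> 'a \<Rightarrow> 'a \<Rightarrow> bool" where
  "is_gcd g a b \<longleftrightarrow> g dvd a \<and> g dvd b \<and> (\<forall>e. e dvd a \<longrightarrow> e dvd b \<longrightarrow> e dvd g)"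

definition dyadic_prod :: "(nat \<Rightarrow> 'a::comm_monoid_mult) \<Rightarrow> nat \<Rightarrow> 'a" where
  "dyadic_prod f n = (\<Prod>i\<le>n. f i ^ 2 ^ i)"

lemma Sqf_nonzero: "a \<in> Sqf \<Longrightarrow> a \<noteq> 0"
  unfolding Sqf_def by (auto dest: spec[of _ 0])

lemma one_in_Sqf: "1 \<in> Sqf"
  unfolding Sqf_def by (auto simp: power2_eq_square) (metis dvd_triv_left mult.assoc)

lemma unit_mult_Sqf:
  assumes "a \<in> Sqf" "u dvd 1"
  shows "u * a \<in> Sqf"
  unfolding Sqf_def
proof clarify
  fix b c
  assume "\<not> b dvd 1" and eq: "u * a = b\<^sup>2 * c"
  obtain v where v: "1 = u * v" using assms(2) by (rule dvdE)
  have "a = v * (u * a)" using v by (simp add: ac_simps)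
  also have "\<dots> = b\<^sup>2 * (v * c)" using eq by (simp add: ac_simps)
  finally have "a = b\<^sup>2 * (v * c)" .
  with assms(1) \<open>\<not> b dvd 1\<close> show False unfolding Sqf_def by blast
qed

lemma units_mult_dvd_one: "a dvd 1 \<Longrightarrow> b dvd 1 \<Longrightarrow> a * b dvd (1::'a::comm_semiring_1)"
  using mult_dvd_mono[of a 1 b 1] by simp

lemma assoc_refl: "assoc a a"
  unfolding assoc_def by (intro exI[of _ 1]) simp

lemma assoc_of_unit_mult_eq:
  assumes "u dvd 1" "v dvd 1" "u * a = v * b"
  shows "assoc a b"
proof -
  obtain w where w: "1 = u * w" using assms(1) by (rule dvdE)
  have "a = w * (u * a)" using w by (simp add: ac_simps)
  also have "\<dots> = (w * v) * b" using assms(3) by (simp add: ac_simps)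
  finally have "a = (w * v) * b" .
  moreover have "w dvd 1" using w by (metis dvd_triv_right)
  then have "w * v dvd 1" using assms(2) by (rule units_mult_dvd_one)
  ultimately show ?thesis unfolding assoc_def by blast
qed

lemma assoc_mult_unit_right: "assoc a (u * b) \<Longrightarrow> u dvd 1 \<Longrightarrow> assoc a b"
  unfolding assoc_def by (metis mult.assoc units_mult_dvd_one)

lemma assoc_one_left_imp_unit: "assoc 1 b \<Longrightarrow> b dvd 1"
  unfolding assoc_def by (metis dvd_triv_right)

lemma gcd_domain_is_gcd_exists:
  assumes G: "gcd_domain_prop TYPE('a::idom)"
  shows "\<exists>g. is_gcd g a (b::'a)"
proof (cases "a = 0 \<or> b = 0")
  case True
  then show ?thesis
    by (metis dvd_0_right dvd_refl is_gcd_def)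
next
  case False
  then have "a \<noteq> 0" "b \<noteq> 0" by auto
  from G obtain l where "{x. a dvd x} \<inter> {x. b dvd x} = {x. l dvd x}"
    unfolding gcd_domain_prop_def by blast
  then have lcm: "a dvd x \<and> b dvd x \<longleftrightarrow> l dvd x" for x
    by (metis (mono_tags) Int_iff mem_Collect_eq)
  text \<open>The gcd is \<open>ab/l\<close> for the generator \<open>l\<close> of the intersection, a least common multiple.\<close>
  obtain g where g: "a * b = l * g"
    using lcm[of "a * b"] by (auto elim: dvdE)
  obtain k where k: "l = a * k" using lcm[of l] by (auto elim: dvdE)
  obtain k' where k': "l = b * k'" using lcm[of l] by (auto elim: dvdE)
  have "l \<noteq> 0" using g \<open>a \<noteq> 0\<close> \<open>b \<noteq> 0\<close> by auto
  have "b = k * g"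
    using g k \<open>a \<noteq> 0\<close> by (simp add: mult.assoc)
  then have "g dvd b" by simp
  have "a = k' * g"
    using g k' \<open>b \<noteq> 0\<close> by (simp add: mult.assoc mult.commute[of a])
  then have "g dvd a" by simp
  have "e dvd g" if ea: "e dvd a" and eb: "e dvd b" for e
  proof -
    obtain a1 where a1: "a = e * a1" using ea by (rule dvdE)
    obtain b1 where b1: "b = e * b1" using eb by (rule dvdE)
    have "l dvd e * a1 * b1"
      using lcm a1 b1 by (metis dvd_triv_left mult.assoc mult.commute)
    then obtain h where h: "e * a1 * b1 = l * h" by (rule dvdE)
    have "l * g = e * (e * a1 * b1)" using g a1 b1 by (simp add: ac_simps)
    also have "\<dots> = l * (e * h)" using h by (simp add: ac_simps)
    finally have "l * g = l * (e * h)" .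
    then show "e dvd g" using \<open>l \<noteq> 0\<close> by simp
  qed
  with \<open>g dvd a\<close> \<open>g dvd b\<close> show ?thesis unfolding is_gcd_def by blast
qed

lemma is_gcd_one_sym: "is_gcd 1 x y \<Longrightarrow> is_gcd 1 y x"
  unfolding is_gcd_def by blast

lemma is_gcd_cofactors_coprime:
  assumes "is_gcd g a b" "g \<noteq> 0" "a = g * a'" "b = g * b'"
  shows "is_gcd (1::'a::idom) a' b'"
  using assms unfolding is_gcd_def
  by (metis dvd_mult_cancel_left one_dvd mult.right_neutral)

lemma gcd_domain_coprime_dvd_mult:
  assumes G: "gcd_domain_prop TYPE('a::idom)"
    and cp: "is_gcd 1 x y" and dvd: "x dvd y * (z::'a)"
  shows "x dvd z"
proof (cases "z = 0")
  case False
  obtain d where d: "is_gcd d (x * z) (y * z)"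
    using gcd_domain_is_gcd_exists[OF G] by blast
  have "x dvd d" using d dvd unfolding is_gcd_def by (simp add: mult.commute)
  obtain d' where d': "d = z * d'"
    using d unfolding is_gcd_def by (metis dvd_triv_right dvdE)
  have "d' dvd x" "d' dvd y"
    using d d' False unfolding is_gcd_def by (simp_all add: mult.commute)
  then have "d' dvd 1" using cp unfolding is_gcd_def by blast
  then have "d dvd z" using d' by (metis mult_dvd_mono dvd_refl mult.right_neutral)
  with \<open>x dvd d\<close> show ?thesis by (rule dvd_trans)
qed simp

lemma gcd_domain_coprime_dvd_power_mult:
  assumes G: "gcd_domain_prop TYPE('a::idom)"
    and cp: "is_gcd 1 x y" and "x dvd y ^ k * (z::'a)"
  shows "x dvd z"
  using assms(3)
proof (induction k)
  case (Suc k)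
  then have "x dvd y * (y ^ k * z)" by (simp add: mult.assoc)
  then have "x dvd y ^ k * z" by (rule gcd_domain_coprime_dvd_mult[OF G cp])
  then show ?case by (rule Suc.IH)
qed simp

lemma gcd_domain_coprime_square_dvd_Sqf_unit:
  assumes G: "gcd_domain_prop TYPE('a::idom)"
    and cp: "is_gcd 1 x y" and dvd: "x\<^sup>2 dvd y\<^sup>2 * (d::'a)" and d: "d \<in> Sqf"
  shows "x dvd 1"
proof -
  have "x \<noteq> 0"
  proof
    assume "x = 0"
    then have "y dvd 1" using cp unfolding is_gcd_def by auto
    with dvd \<open>x = 0\<close> Sqf_nonzero[OF d] show False by auto
  qed
  have "x dvd y\<^sup>2 * d" using dvd by (metis dvd_mult_left power2_eq_square)
  then have "x dvd d" by (rule gcd_domain_coprime_dvd_power_mult[OF G cp])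
  then obtain d1 where d1: "d = x * d1" by (rule dvdE)
  have "x * x dvd x * (y\<^sup>2 * d1)"
    using dvd d1 by (simp add: power2_eq_square ac_simps)
  then have "x dvd y\<^sup>2 * d1" using \<open>x \<noteq> 0\<close> by simp
  then have "x dvd d1" by (rule gcd_domain_coprime_dvd_power_mult[OF G cp])
  then obtain d2 where "d = x\<^sup>2 * d2"
    using d1 by (auto simp: power2_eq_square mult.assoc elim: dvdE)
  then show ?thesis using d unfolding Sqf_def by blast
qed

lemma gcd_domain_square_mult_Sqf_eq_imp_assoc:
  assumes G: "gcd_domain_prop TYPE('a::idom)"
    and "a \<noteq> 0" "b \<in> Sqf" "d \<in> Sqf" and eq: "a\<^sup>2 * b = c\<^sup>2 * (d::'a)"
  shows "assoc a c \<and> assoc b d"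
proof -
  obtain g where g: "is_gcd g a c" using gcd_domain_is_gcd_exists[OF G] by blast
  obtain a' where a': "a = g * a'" using g unfolding is_gcd_def by blast
  obtain c' where c': "c = g * c'" using g unfolding is_gcd_def by blast
  have "g \<noteq> 0" using a' \<open>a \<noteq> 0\<close> by auto
  have cp: "is_gcd 1 a' c'" using is_gcd_cofactors_coprime[OF g \<open>g \<noteq> 0\<close> a' c'] .
  have "g\<^sup>2 * (a'\<^sup>2 * b) = g\<^sup>2 * (c'\<^sup>2 * d)"
    using eq a' c' by (simp add: power_mult_distrib ac_simps)
  then have eq': "a'\<^sup>2 * b = c'\<^sup>2 * d" using \<open>g \<noteq> 0\<close> by simp
  have "a' dvd 1"
    using gcd_domain_coprime_square_dvd_Sqf_unit[OF G cp _ \<open>d \<in> Sqf\<close>] eq'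
    by (metis dvd_triv_left)
  moreover have "c' dvd 1"
    using gcd_domain_coprime_square_dvd_Sqf_unit[OF G is_gcd_one_sym[OF cp] _ \<open>b \<in> Sqf\<close>] eq'
    by (metis dvd_triv_left)
  moreover have "c' * a = a' * c" using a' c' by (simp add: ac_simps)
  ultimately have "assoc a c" by (intro assoc_of_unit_mult_eq[of c' a'])
  moreover have "assoc b d"
    using \<open>a' dvd 1\<close> \<open>c' dvd 1\<close> eq'
    by (intro assoc_of_unit_mult_eq) (simp_all add: power2_eq_square units_mult_dvd_one)
  ultimately show ?thesis ..
qed

lemma dyadic_prod_0 [simp]: "dyadic_prod f 0 = f 0"
  by (simp add: dyadic_prod_def)

lemma dyadic_prod_Suc_shift:
  fixes f :: "nat \<Rightarrow> 'a::comm_semiring_1"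
  shows "dyadic_prod f (Suc n) = f 0 * (dyadic_prod (\<lambda>i. f (Suc i)) n)\<^sup>2"
proof -
  have "dyadic_prod f (Suc n) = f 0 * (\<Prod>i\<le>n. f (Suc i) ^ 2 ^ Suc i)"
    unfolding dyadic_prod_def by (subst prod.atMost_Suc_shift) simp
  also have "(\<Prod>i\<le>n. f (Suc i) ^ 2 ^ Suc i) = (\<Prod>i\<le>n. (f (Suc i) ^ 2 ^ i)\<^sup>2)"
    by (intro prod.cong refl) (simp add: power_mult[symmetric] mult.commute)
  also have "\<dots> = (dyadic_prod (\<lambda>i. f (Suc i)) n)\<^sup>2"
    unfolding dyadic_prod_def by (rule prod_power_distrib[symmetric])
  finally show ?thesis .
qed

lemma dyadic_prod_mult_first:
  "dyadic_prod (f(0 := u * f 0)) n = u * dyadic_prod f n"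
  by (induction n) (simp_all add: dyadic_prod_def mult.assoc)

lemma dyadic_prod_pad_ones:
  assumes "n \<le> m"
  shows "dyadic_prod (\<lambda>i. if i \<le> n then f i else 1) m = dyadic_prod f n"
  unfolding dyadic_prod_def using assms
  by (intro prod.mono_neutral_cong_right) auto

lemma dyadic_prod_Sqf_nonzero:
  "\<forall>i\<le>n. f i \<in> Sqf \<Longrightarrow> dyadic_prod f n \<noteq> (0::'a::idom)"
  unfolding dyadic_prod_def by (auto simp: Sqf_nonzero)

lemma gcd_domain_dyadic_prod_eq_imp_assoc:
  assumes G: "gcd_domain_prop TYPE('a::idom)"
  shows "\<forall>i\<le>n. s i \<in> Sqf \<Longrightarrow> \<forall>i\<le>n. t i \<in> Sqf \<Longrightarrow> dyadic_prod s n = dyadic_prod t n \<Longrightarrow>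
    \<forall>i\<le>n. assoc (s i) (t i :: 'a)"
proof (induction n arbitrary: s t)
  case 0
  then show ?case by (simp add: assoc_refl)
next
  case (Suc n)
  define X where "X = dyadic_prod (\<lambda>i. s (Suc i)) n"
  define Y where "Y = dyadic_prod (\<lambda>i. t (Suc i)) n"
  have "X\<^sup>2 * s 0 = Y\<^sup>2 * t 0"
    using Suc.prems(3) by (simp add: X_def Y_def dyadic_prod_Suc_shift mult.commute)
  moreover have "X \<noteq> 0"
    unfolding X_def using Suc.prems(1) by (intro dyadic_prod_Sqf_nonzero) auto
  moreover have "s 0 \<in> Sqf" "t 0 \<in> Sqf" using Suc.prems(1,2) by auto
  ultimately have "assoc X Y" and head: "assoc (s 0) (t 0)"
    using gcd_domain_square_mult_Sqf_eq_imp_assoc[OF G] by auto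
  then obtain u where u: "u dvd 1" "X = u * Y" unfolding assoc_def by blast
  define t' where "t' = (\<lambda>i. t (Suc i))(0 := u * t 1)"
  have "\<forall>i\<le>n. s (Suc i) \<in> Sqf" using Suc.prems(1) by auto
  moreover have "\<forall>i\<le>n. t' i \<in> Sqf"
    using Suc.prems(2) unit_mult_Sqf[OF _ u(1)] by (auto simp: t'_def)
  moreover have "dyadic_prod (\<lambda>i. s (Suc i)) n = dyadic_prod t' n"
    using u(2) dyadic_prod_mult_first[of "\<lambda>i. t (Suc i)" u n] by (simp add: X_def Y_def t'_def)
  ultimately have tail: "\<forall>i\<le>n. assoc (s (Suc i)) (t' i)"
    by (rule Suc.IH)
  show ?case
  proof (intro allI impI)
    fix i assume "i \<le> Suc n"
    show "assoc (s i) (t i)"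
    proof (cases i)
      case 0
      with head show ?thesis by simp
    next
      case (Suc j)
      with \<open>i \<le> Suc n\<close> tail have "assoc (s i) (t' j)" by simp
      show ?thesis
      proof (cases "j = 0")
        case True
        with \<open>assoc (s i) (t' j)\<close> Suc have "assoc (s i) (u * t i)" by (simp add: t'_def)
        then show ?thesis using u(1) by (rule assoc_mult_unit_right)
      qed (use \<open>assoc (s i) (t' j)\<close> Suc in \<open>simp add: t'_def\<close>)
    qed
  qed
qed

theorem proposition2:
  fixes s t :: "nat \<Rightarrow> 'a::idom" and n m :: nat
  assumes "gcd_domain_prop TYPE('a)"
    and "n \<le> m"
    and "\<forall>i\<le>n. s i \<in> Sqf"
    and "\<forall>i\<le>m. t i \<in> Sqf"
    and "(\<Prod>i\<le>n. s i ^ (2 ^ i)) = (\<Prod>i\<le>m. t i ^ (2 ^ i))"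
  shows "(\<forall>i\<le>n. assoc (s i) (t i)) \<and> (m > n \<longrightarrow> (\<forall>i\<in>{n<..m}. t i dvd 1))"
proof -
  define s' where "s' = (\<lambda>i. if i \<le> n then s i else 1)"
  have "dyadic_prod s' m = dyadic_prod s n"
    unfolding s'_def using assms(2) by (rule dyadic_prod_pad_ones)
  also have "\<dots> = dyadic_prod t m" using assms(5) by (simp add: dyadic_prod_def)
  finally have "dyadic_prod s' m = dyadic_prod t m" .
  moreover have "\<forall>i\<le>m. s' i \<in> Sqf"
    using assms(3) by (simp add: s'_def one_in_Sqf)
  ultimately have padded: "\<forall>i\<le>m. assoc (s' i) (t i)"
    using gcd_domain_dyadic_prod_eq_imp_assoc[OF assms(1)] assms(4) by blast
  have "assoc (s i) (t i)" if "i \<le> n" for i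
    using padded[rule_format, of i] that assms(2) by (simp add: s'_def)
  moreover have "t i dvd 1" if "i \<in> {n<..m}" for i
  proof -
    have "assoc 1 (t i)" using padded[rule_format, of i] that by (simp add: s'_def)
    then show ?thesis by (rule assoc_one_left_imp_unit)
  qed
  ultimately show ?thesis by blast
qed

end
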